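(* Let $M$ be a magma satisfying $(xy)z = xz$ and $x(yz) = xz$ for all $x,y,z\in M$. Then $M$ satisfies the identities $(xy)z = x(yz)$ and $x(yx) = x$ for all $x,y,z\in M$ (i.e. $M$ is a rectangular band) if and only if $M$ avoids the $2$-element null semigroup $2_N$ on $\{0,1\}$ with Cayley table \[ \begin{array}{c|cc} 2_{N} & 0 & 1 \\ \hline 0 & 0 & 0 \\ 1 & 0 & 0 \end{array}. \]
   Context: A magma is a nonempty set with a binary operation, written by juxtaposition. A magma $M$ avoids a magma $F$ if no submagma of $M$ is isomorphic to $F$. *)

theory Defs
  imports Main
begin

definition magma :: "'a set \<Rightarrow> ('a \<Rightarrow> 'a \<Rightarrow> 'a) \<Rightarrow> bool" where
  "magma M f \<longleftrightarrow> M \<noteq> {} \<and> (\<forall>x\<in>M. \<forall>y\<in>M. f x y \<in> M)"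

definition submagma :: "'a set \<Rightarrow> 'a set \<Rightarrow> ('a \<Rightarrow> 'a \<Rightarrow> 'a) \<Rightarrow> bool" where
  "submagma S M f \<longleftrightarrow> S \<noteq> {} \<and> S \<subseteq> M \<and> (\<forall>x\<in>S. \<forall>y\<in>S. f x y \<in> S)"

definition magma_iso :: "('b \<Rightarrow> 'a) \<Rightarrow> 'b set \<Rightarrow> ('b \<Rightarrow> 'b \<Rightarrow> 'b) \<Rightarrow> 'a set \<Rightarrow> ('a \<Rightarrow> 'a \<Rightarrow> 'a) \<Rightarrow> bool" where
  "magma_iso h A g B f \<longleftrightarrow> bij_betw h A B \<and> (\<forall>x\<in>A. \<forall>y\<in>A. h (g x y) = f (h x) (h y))"

definition avoids :: "'a set \<Rightarrow> ('a \<Rightarrow> 'a \<Rightarrow> 'a) \<Rightarrow> 'b set \<Rightarrow> ('b \<Rightarrow> 'b \<Rightarrow> 'b) \<Rightarrow> bool" where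
  "avoids M f F g \<longleftrightarrow> \<not> (\<exists>S. submagma S M f \<and> (\<exists>h. magma_iso h F g S f))"

definition null2_carrier :: "nat set" where "null2_carrier = {0, 1}"
definition null2_op :: "nat \<Rightarrow> nat \<Rightarrow> nat" where "null2_op x y = 0"

end

theory Submission
  imports Defs
begin

text \<open>
  Under the identities (xy)z = xz and x(yz) = xz, associativity holds outright and x(yx) = xx,
  so M is a rectangular band exactly when it is idempotent. A copy {a, b} of 2_N inside M
  has bb = a \<noteq> b, so idempotent magmas avoid 2_N; conversely, if xx \<noteq> x then the
  identities make {xx, x} a copy of 2_N with zero xx.
\<close>

lemma not_avoids_null2_iff:
  "\<not> avoids M f null2_carrier null2_op \<longleftrightarrow>
     (\<exists>a\<in>M. \<exists>b\<in>M. a \<noteq> b \<and> f a a = a \<and> f a b = a \<and> f b a = a \<and> f b b = a)"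
proof
  assume "\<not> avoids M f null2_carrier null2_op"
  then obtain S h where S: "submagma S M f" and h: "magma_iso h null2_carrier null2_op S f"
    unfolding avoids_def by blast
  have bij: "bij_betw h {0, 1} S"
    and hom: "\<forall>m\<in>{0, 1}. \<forall>n\<in>{0, 1}. h 0 = f (h m) (h n)"
    using h unfolding magma_iso_def null2_carrier_def null2_op_def by auto
  have "h 0 \<noteq> h 1"
    using bij by (auto simp: bij_betw_def inj_on_def)
  moreover have "h 0 \<in> M" "h 1 \<in> M"
    using bij S by (auto simp: bij_betw_def submagma_def)
  ultimately show "\<exists>a\<in>M. \<exists>b\<in>M. a \<noteq> b \<and> f a a = a \<and> f a b = a \<and> f b a = a \<and> f b b = a"
    using hom by (metis insertI1 insertI2 singletonI)
next
  assume "\<exists>a\<in>M. \<exists>b\<in>M. a \<noteq> b \<and> f a a = a \<and> f a b = a \<and> f b a = a \<and> f b b = a"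
  then obtain a b where ab: "a \<in> M" "b \<in> M" "a \<noteq> b"
    and prod: "f a a = a" "f a b = a" "f b a = a" "f b b = a"
    by blast
  define h where "h n = (if n = 0 then a else b)" for n :: nat
  have "submagma {a, b} M f"
    using ab prod unfolding submagma_def by auto
  moreover have "magma_iso h null2_carrier null2_op {a, b} f"
    using ab prod
    by (auto simp: magma_iso_def null2_carrier_def null2_op_def h_def bij_betw_def inj_on_def)
  ultimately show "\<not> avoids M f null2_carrier null2_op"
    unfolding avoids_def by blast
qed

lemma idempotent_imp_avoids_null2:
  assumes "\<forall>x\<in>M. f x x = x"
  shows "avoids M f null2_carrier null2_op"
  using assms not_avoids_null2_iff by metis

context
  fixes M :: "'a set" and f :: "'a \<Rightarrow> 'a \<Rightarrow> 'a"
  assumes left_absorb: "\<forall>x\<in>M. \<forall>y\<in>M. \<forall>z\<in>M. f (f x y) z = f x z"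
    and right_absorb: "\<forall>x\<in>M. \<forall>y\<in>M. \<forall>z\<in>M. f x (f y z) = f x z"
begin

lemma avoids_null2_imp_idempotent:
  assumes closed: "\<forall>x\<in>M. \<forall>y\<in>M. f x y \<in> M"
    and avoids: "avoids M f null2_carrier null2_op"
  shows "\<forall>x\<in>M. f x x = x"
proof (rule ccontr)
  assume "\<not> (\<forall>x\<in>M. f x x = x)"
  then obtain x where x: "x \<in> M" "f x x \<noteq> x" by blast
  let ?a = "f x x"
  have "?a \<in> M" using closed x by blast
  moreover have "f ?a ?a = ?a" "f ?a x = ?a" "f x ?a = ?a"
    using left_absorb right_absorb x \<open>?a \<in> M\<close> by simp_all
  ultimately have "\<not> avoids M f null2_carrier null2_op"
    using x not_avoids_null2_iff[of M f] by metis
  then show False using avoids by contradiction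
qed

lemma rectangular_band_iff_idempotent:
  "((\<forall>x\<in>M. \<forall>y\<in>M. \<forall>z\<in>M. f (f x y) z = f x (f y z)) \<and> (\<forall>x\<in>M. \<forall>y\<in>M. f x (f y x) = x))
     \<longleftrightarrow> (\<forall>x\<in>M. f x x = x)"
  using left_absorb right_absorb by force

end

theorem mainTheorem2:
  fixes M :: "'a set" and f :: "'a \<Rightarrow> 'a \<Rightarrow> 'a"
  assumes "magma M f"
    and "\<forall>x\<in>M. \<forall>y\<in>M. \<forall>z\<in>M. f (f x y) z = f x z"
    and "\<forall>x\<in>M. \<forall>y\<in>M. \<forall>z\<in>M. f x (f y z) = f x z"
  shows "((\<forall>x\<in>M. \<forall>y\<in>M. \<forall>z\<in>M. f (f x y) z = f x (f y z))
            \<and> (\<forall>x\<in>M. \<forall>y\<in>M. f x (f y x) = x))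
         \<longleftrightarrow> avoids M f null2_carrier null2_op"
proof -
  have closed: "\<forall>x\<in>M. \<forall>y\<in>M. f x y \<in> M"
    using assms(1) unfolding magma_def by blast
  show ?thesis
    unfolding rectangular_band_iff_idempotent[OF assms(2,3)]
    using idempotent_imp_avoids_null2 avoids_null2_imp_idempotent[OF assms(2,3) closed]
    by blast
qed

end
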